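(* Let $n\ge 3$ and let $L\subseteq\Sigma^*$ be a finite or cofinite regular language with state complexity $n$ such that $\sigma(L)=(n-1)!$. Then $|\Sigma|\ge (n-1)!-(n-2)!$. Moreover, this bound is tight: for every $n\ge 3$ there exists a finite or cofinite language over an alphabet of size exactly $(n-1)!-(n-2)!$ with state complexity $n$ and syntactic complexity $(n-1)!$.
   Context: $\Sigma$ is a finite non-empty alphabet. A language is cofinite if its complement is finite. The state complexity of a regular language $L$ is the number of states of its minimal deterministic finite automaton (DFA). The syntactic congruence of $L$ is $x\approx_L y$ iff for all $u,v\in\Sigma^*$, $uxv\in L\Leftrightarrow uyv\in L$; the syntactic semigroup is $\Sigma^+/\approx_L$, and the syntactic complexity $\sigma(L)$ is its cardinality (equivalently, the number of distinct transformations of the states of the minimal DFA of $L$ induced by non-empty words). *)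

theory Defs
  imports Main
begin

text \<open>Complete DFAs over an alphabet Alph (a finite set of letters), with states
  drawn from nat (any finite state set can be relabelled).\<close>

definition dfa :: "'a set \<Rightarrow> nat set \<Rightarrow> (nat \<Rightarrow> 'a \<Rightarrow> nat) \<Rightarrow> nat \<Rightarrow> nat set \<Rightarrow> bool" where
  "dfa Alph Q delta q0 F \<longleftrightarrow> finite Q \<and> q0 \<in> Q \<and> F \<subseteq> Q \<and>
     (\<forall>q\<in>Q. \<forall>a\<in>Alph. delta q a \<in> Q)"

definition dfa_lang :: "'a set \<Rightarrow> (nat \<Rightarrow> 'a \<Rightarrow> nat) \<Rightarrow> nat \<Rightarrow> nat set \<Rightarrow> 'a list set" where
  "dfa_lang Alph delta q0 F = {w \<in> lists Alph. foldl delta q0 w \<in> F}"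

definition regular :: "'a set \<Rightarrow> 'a list set \<Rightarrow> bool" where
  "regular Alph L \<longleftrightarrow> (\<exists>Q delta q0 F. dfa Alph Q delta q0 F \<and> dfa_lang Alph delta q0 F = L)"

definition state_complexity :: "'a set \<Rightarrow> 'a list set \<Rightarrow> nat" where
  "state_complexity Alph L = (LEAST n. \<exists>Q delta q0 F. dfa Alph Q delta q0 F \<and> card Q = n
       \<and> dfa_lang Alph delta q0 F = L)"

definition syn_cong :: "'a set \<Rightarrow> 'a list set \<Rightarrow> 'a list \<Rightarrow> 'a list \<Rightarrow> bool" where
  "syn_cong Alph L x y \<longleftrightarrow> (\<forall>u\<in>lists Alph. \<forall>v\<in>lists Alph. u @ x @ v \<in> L \<longleftrightarrow> u @ y @ v \<in> L)"

definition nonempty_words :: "'a set \<Rightarrow> 'a list set" where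
  "nonempty_words Alph = lists Alph - {[]}"

definition syntactic_complexity :: "'a set \<Rightarrow> 'a list set \<Rightarrow> nat" where
  "syntactic_complexity Alph L =
     card (nonempty_words Alph //
       {(x, y). x \<in> nonempty_words Alph \<and> y \<in> nonempty_words Alph \<and> syn_cong Alph L x y})"

definition finite_or_cofinite :: "'a set \<Rightarrow> 'a list set \<Rightarrow> bool" where
  "finite_or_cofinite Alph L \<longleftrightarrow> finite L \<or> finite (lists Alph - L)"

end

theory Submission
  imports Defs "HOL-Library.FuncSet"
begin

text \<open>Number the quotients of a finite language increasingly by height (the length of
  their longest word plus one), so that the empty quotient becomes the sink 0. A letter strictly
  lowers the height of every nonempty quotient, hence maps each state i > 0 below i: the
  transformation semigroup lies in the monoid T of maps with t 0 = 0 and t i < i, which has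
  (n-1)! elements. Syntactic complexity (n-1)! therefore forces n quotients and all of T to
  occur. A product of two elements of T satisfies t i \<le> i - 2, so each of the
  (n-1)! - (n-2)! elements of T without this property must be the action of a letter.
  Conversely these elements generate T, which yields the tight example; cofinite languages
  reduce to finite ones by complementation.\<close>

section \<open>Lowering maps\<close>

text \<open>Subtraction truncates, so every i \<le> k is sent to 0.\<close>

definition lowering_maps :: "nat \<Rightarrow> nat \<Rightarrow> (nat \<Rightarrow> nat) set" where
  "lowering_maps k n = (\<Pi>\<^sub>E i\<in>{0..<n}. {..i - k})"

lemma lowering_maps_iff:
  "t \<in> lowering_maps k n \<longleftrightarrow> t \<in> extensional {0..<n} \<and> (\<forall>i<n. t i \<le> i - k)"
  unfolding lowering_maps_def PiE_def by auto

lemma restrict_in_lowering_maps: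
  "(\<And>i. i < n \<Longrightarrow> t i \<le> i - k) \<Longrightarrow> restrict t {0..<n} \<in> lowering_maps k n"
  by (simp add: lowering_maps_iff)

lemma lowering_maps_le: "t \<in> lowering_maps k n \<Longrightarrow> i < n \<Longrightarrow> t i \<le> i - k"
  by (simp add: lowering_maps_iff)

lemma lowering_maps_antimono: "l \<le> k \<Longrightarrow> lowering_maps k n \<subseteq> lowering_maps l n"
  unfolding lowering_maps_def by (rule PiE_mono) auto

lemma finite_lowering_maps: "finite (lowering_maps k n)"
  unfolding lowering_maps_def by (rule finite_PiE) auto

lemma card_lowering_maps: "card (lowering_maps k n) = fact (n - k)"
proof (induction n)
  case 0
  then show ?case by (simp add: lowering_maps_def)
next
  case (Suc n)
  have "card (lowering_maps k (Suc n)) = (\<Prod>i<Suc n. Suc (i - k))"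
    unfolding lowering_maps_def by (subst card_PiE) (auto simp: atLeast0LessThan)
  also have "\<dots> = card (lowering_maps k n) * Suc (n - k)"
    unfolding lowering_maps_def by (subst card_PiE) (auto simp: atLeast0LessThan)
  also have "\<dots> = fact (Suc n - k)"
    using Suc.IH by (cases "k \<le> n") (auto simp: Suc_diff_le)
  finally show ?case .
qed

lemma compose_lowering_maps:
  assumes "u \<in> lowering_maps k n" and "v \<in> lowering_maps l n"
  shows "compose {0..<n} v u \<in> lowering_maps (k + l) n"
proof -
  have "v (u i) \<le> i - (k + l)" if "i < n" for i
  proof -
    have "u i \<le> i - k" using assms(1) that by (rule lowering_maps_le)
    moreover have "v (u i) \<le> u i - l" using assms(2) \<open>u i \<le> i - k\<close> that
      by (intro lowering_maps_le) auto
    ultimately show ?thesis by linarith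
  qed
  then show ?thesis by (simp add: lowering_maps_iff compose_eq)
qed

lemma lowering_maps_2_factor:
  assumes "t \<in> lowering_maps 2 n"
  defines "v \<equiv> restrict (\<lambda>j. if j + 1 < n then t (j + 1) else 0) {0..<n}"
  shows "v \<in> lowering_maps 1 n" and "compose {0..<n} v (restrict (\<lambda>i. i - 1) {0..<n}) = t"
proof -
  show "v \<in> lowering_maps 1 n"
    unfolding v_def using lowering_maps_le[OF assms(1)] by (intro restrict_in_lowering_maps) fastforce
  show "compose {0..<n} v (restrict (\<lambda>i. i - 1) {0..<n}) = t"
  proof (rule extensionalityI[of _ "{0..<n}"])
    fix i assume "i \<in> {0..<n}"
    then show "compose {0..<n} v (restrict (\<lambda>i. i - 1) {0..<n}) i = t i"
      using lowering_maps_le[OF assms(1), of 0] lowering_maps_le[OF assms(1), of 1]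
      by (cases "i = 0") (auto simp: v_def compose_eq)
  qed (use assms(1) in \<open>auto simp: lowering_maps_iff\<close>)
qed

lemma lowering_maps_generated:
  assumes n: "3 \<le> n"
    and gens: "lowering_maps 1 n - lowering_maps 2 n \<subseteq> S"
    and closed: "\<And>u v. u \<in> S \<Longrightarrow> v \<in> S \<Longrightarrow> compose {0..<n} v u \<in> S"
  shows "lowering_maps 1 n \<subseteq> S"
proof -
  have gen: "restrict t {0..<n} \<in> lowering_maps 1 n - lowering_maps 2 n"
    if "\<And>i. i < n \<Longrightarrow> t i \<le> i - 1" and "t 2 = 1" for t
    using that n by (auto simp: lowering_maps_iff intro!: exI[of _ 2])
  define u where "u = restrict (\<lambda>i. if i \<le> 1 then 0 else 1 :: nat) {0..<n}"
  define s where "s = restrict (\<lambda>i::nat. i - 1) {0..<n}"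
  have "u \<in> S"
    unfolding u_def by (rule subsetD[OF gens gen]) auto
  have "s \<in> S"
    unfolding s_def by (rule subsetD[OF gens gen]) auto
  \<comment> \<open>induction on a bound k such that t vanishes on [k, n); the zero map is u \<circ> u\<close>
  have "t \<in> S" if "t \<in> lowering_maps 1 n" "\<forall>i. k \<le> i \<and> i < n \<longrightarrow> t i = 0" for k t
    using that
  proof (induction k arbitrary: t)
    case 0
    have "t = compose {0..<n} u u"
      using 0 by (intro extensionalityI[of _ "{0..<n}"]) (auto simp: lowering_maps_iff u_def compose_eq)
    then show ?case using closed \<open>u \<in> S\<close> by simp
  next
    case (Suc k)
    show ?case
    proof (cases "t \<in> lowering_maps 2 n")
      case False
      then show ?thesis using Suc.prems gens by blast
    next
      case True
      define v where "v = restrict (\<lambda>j. if j + 1 < n then t (j + 1) else 0) {0..<n}"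
      have "v \<in> lowering_maps 1 n" and "compose {0..<n} v s = t"
        using lowering_maps_2_factor[OF True] by (simp_all add: v_def s_def)
      moreover have "\<forall>i. k \<le> i \<and> i < n \<longrightarrow> v i = 0" using Suc.prems(2) by (auto simp: v_def)
      ultimately have "v \<in> S" by (intro Suc.IH)
      then show ?thesis using closed \<open>s \<in> S\<close> \<open>compose {0..<n} v s = t\<close> by metis
    qed
  qed
  from this[of _ n] show ?thesis by auto
qed

lemma card_lowering_maps_1_diff_2:
  "card (lowering_maps 1 n - lowering_maps 2 n) = fact (n - 1) - fact (n - 2)"
  using lowering_maps_antimono[of 1 2 n]
  by (simp add: card_Diff_subset finite_subset[OF _ finite_lowering_maps] card_lowering_maps)

section \<open>Quotients and minimal automata\<close>

definition lquot :: "'a list \<Rightarrow> 'a list set \<Rightarrow> 'a list set" where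
  "lquot u X = {v. u @ v \<in> X}"

definition quotients :: "'a set \<Rightarrow> 'a list set \<Rightarrow> 'a list set set" where
  "quotients Alph L = (\<lambda>u. lquot u L) ` lists Alph"

lemma lquot_Nil [simp]: "lquot [] X = X"
  by (simp add: lquot_def)

lemma lquot_append: "lquot (u @ v) X = lquot v (lquot u X)"
  by (simp add: lquot_def)

lemma lquot_in_quotients:
  assumes "X \<in> quotients Alph L" and "w \<in> lists Alph"
  shows "lquot w X \<in> quotients Alph L"
proof -
  from assms(1) obtain u where "u \<in> lists Alph" and "X = lquot u L"
    by (auto simp: quotients_def)
  then have "lquot w X = lquot (u @ w) L" and "u @ w \<in> lists Alph"
    using assms(2) by (simp_all add: lquot_append)
  then show ?thesis unfolding quotients_def by blast
qed

lemma quotients_subset_lists: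
  "L \<subseteq> lists Alph \<Longrightarrow> X \<in> quotients Alph L \<Longrightarrow> X \<subseteq> lists Alph"
  by (auto simp: quotients_def lquot_def)

lemma finite_lquot: "finite X \<Longrightarrow> finite (lquot w X)"
  unfolding lquot_def by (rule finite_vimageI[of X "\<lambda>v. w @ v", unfolded vimage_def]) (auto simp: inj_def)

lemma foldl_dfa_in_states:
  "dfa Alph Q delta q0 F \<Longrightarrow> q \<in> Q \<Longrightarrow> w \<in> lists Alph \<Longrightarrow> foldl delta q w \<in> Q"
  by (induction w arbitrary: q) (auto simp: dfa_def)

lemma lquot_dfa_lang:
  "u \<in> lists Alph \<Longrightarrow> lquot u (dfa_lang Alph delta q F) = dfa_lang Alph delta (foldl delta q u) F"
  by (auto simp: lquot_def dfa_lang_def)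

lemma dfa_lang_subset_lists: "dfa_lang Alph delta q F \<subseteq> lists Alph"
  by (auto simp: dfa_lang_def)

lemma quotients_dfa_lang:
  "quotients Alph (dfa_lang Alph delta q0 F)
     = (\<lambda>q. dfa_lang Alph delta q F) ` (\<lambda>u. foldl delta q0 u) ` lists Alph"
  unfolding quotients_def image_image by (rule image_cong) (simp_all add: lquot_dfa_lang)

lemma card_quotients_le:
  assumes "dfa Alph Q delta q0 F"
  shows "finite (quotients Alph (dfa_lang Alph delta q0 F))"
    and "card (quotients Alph (dfa_lang Alph delta q0 F)) \<le> card Q"
proof -
  have "finite Q" and "q0 \<in> Q" using assms by (simp_all add: dfa_def)
  then have reach: "(\<lambda>u. foldl delta q0 u) ` lists Alph \<subseteq> Q"
    using foldl_dfa_in_states[OF assms] by blast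
  have "finite ((\<lambda>u. foldl delta q0 u) ` lists Alph)" using reach \<open>finite Q\<close> by (rule finite_subset)
  then show "finite (quotients Alph (dfa_lang Alph delta q0 F))"
    unfolding quotients_dfa_lang by (rule finite_imageI)
  have "card (quotients Alph (dfa_lang Alph delta q0 F)) \<le> card ((\<lambda>u. foldl delta q0 u) ` lists Alph)"
    unfolding quotients_dfa_lang using \<open>finite ((\<lambda>u. foldl delta q0 u) ` lists Alph)\<close> by (rule card_image_le)
  also have "\<dots> \<le> card Q" using \<open>finite Q\<close> reach by (rule card_mono)
  finally show "card (quotients Alph (dfa_lang Alph delta q0 F)) \<le> card Q" .
qed

lemma syn_cong_iff_lquot:
  assumes "L \<subseteq> lists Alph"
  shows "syn_cong Alph L x y \<longleftrightarrow> (\<forall>X\<in>quotients Alph L. lquot x X = lquot y X)"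
proof -
  have "lquot x (lquot u L) \<subseteq> lists Alph" for x u
    using assms by (auto simp: lquot_def)
  then have "lquot x (lquot u L) = lquot y (lquot u L) \<longleftrightarrow>
      (\<forall>v\<in>lists Alph. u @ x @ v \<in> L \<longleftrightarrow> u @ y @ v \<in> L)" for u
    by (auto simp: lquot_def) blast+
  then show ?thesis by (simp add: syn_cong_def quotients_def)
qed

lemma card_quotient_restricted_kernel:
  "card (A // {(x, y). x \<in> A \<and> y \<in> A \<and> f x = f y}) = card (f ` A)"
proof -
  have "{(x, y). x \<in> A \<and> y \<in> A \<and> f x = f y} `` {x} = {y \<in> A. f y = f x}" if "x \<in> A" for x
    using that by auto
  then have "A // {(x, y). x \<in> A \<and> y \<in> A \<and> f x = f y} = (\<lambda>c. {y \<in> A. f y = c}) ` f ` A"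
    unfolding quotient_def by (auto simp: image_image)
  moreover have "inj_on (\<lambda>c. {y \<in> A. f y = c}) (f ` A)"
    by (rule inj_onI) auto
  ultimately show ?thesis by (simp add: card_image)
qed

lemma syntactic_complexity_eq_card_image:
  assumes "\<And>x y. x \<in> nonempty_words Alph \<Longrightarrow> y \<in> nonempty_words Alph \<Longrightarrow>
             syn_cong Alph L x y \<longleftrightarrow> f x = f y"
  shows "syntactic_complexity Alph L = card (f ` nonempty_words Alph)"
proof -
  have "{(x, y). x \<in> nonempty_words Alph \<and> y \<in> nonempty_words Alph \<and> syn_cong Alph L x y}
      = {(x, y). x \<in> nonempty_words Alph \<and> y \<in> nonempty_words Alph \<and> f x = f y}"
    using assms by blast
  then show ?thesis
    unfolding syntactic_complexity_def by (simp add: card_quotient_restricted_kernel)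
qed

definition word_map :: "nat set \<Rightarrow> (nat \<Rightarrow> 'a \<Rightarrow> nat) \<Rightarrow> 'a list \<Rightarrow> nat \<Rightarrow> nat" where
  "word_map Q delta w = restrict (\<lambda>q. foldl delta q w) Q"

lemma restrict_eq_restrict_iff: "restrict f A = restrict g A \<longleftrightarrow> (\<forall>x\<in>A. f x = g x)"
  by (metis restrict_apply' restrict_ext)

lemma word_map_eq_iff:
  "word_map Q delta x = word_map Q delta y \<longleftrightarrow> (\<forall>q\<in>Q. foldl delta q x = foldl delta q y)"
  by (simp add: word_map_def restrict_eq_restrict_iff)

lemma restrict_in_word_maps_iff:
  "restrict t Q \<in> word_map Q delta ` W \<longleftrightarrow> (\<exists>w\<in>W. \<forall>q\<in>Q. foldl delta q w = t q)"
  by (auto simp: image_iff word_map_def restrict_eq_restrict_iff) metis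

lemma word_map_append:
  assumes "dfa Alph Q delta q0 F" and "u \<in> lists Alph"
  shows "word_map Q delta (u @ v) = compose Q (word_map Q delta v) (word_map Q delta u)"
  using foldl_dfa_in_states[OF assms(1) _ assms(2)]
  by (intro extensionalityI[of _ Q]) (auto simp: word_map_def compose_eq)

definition minimal_dfa :: "'a set \<Rightarrow> nat set \<Rightarrow> (nat \<Rightarrow> 'a \<Rightarrow> nat) \<Rightarrow> nat \<Rightarrow> nat set \<Rightarrow> bool" where
  "minimal_dfa Alph Q delta q0 F \<longleftrightarrow> dfa Alph Q delta q0 F \<and>
     Q \<subseteq> (\<lambda>u. foldl delta q0 u) ` lists Alph \<and> inj_on (\<lambda>q. dfa_lang Alph delta q F) Q"

lemma quotients_minimal_dfa:
  assumes "minimal_dfa Alph Q delta q0 F"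
  shows "quotients Alph (dfa_lang Alph delta q0 F) = (\<lambda>q. dfa_lang Alph delta q F) ` Q"
proof -
  have "q0 \<in> Q" and "Q \<subseteq> (\<lambda>u. foldl delta q0 u) ` lists Alph"
    using assms by (simp_all add: minimal_dfa_def dfa_def)
  then have "(\<lambda>u. foldl delta q0 u) ` lists Alph = Q"
    using foldl_dfa_in_states[of Alph Q delta q0 F] assms by (auto simp: minimal_dfa_def)
  then show ?thesis by (simp add: quotients_dfa_lang)
qed

lemma state_complexity_minimal_dfa:
  assumes "minimal_dfa Alph Q delta q0 F"
  shows "state_complexity Alph (dfa_lang Alph delta q0 F) = card Q"
  unfolding state_complexity_def
proof (rule Least_equality)
  show "\<exists>Q' delta' q0' F'. dfa Alph Q' delta' q0' F' \<and> card Q' = card Q \<and>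
          dfa_lang Alph delta' q0' F' = dfa_lang Alph delta q0 F"
    using assms by (auto simp: minimal_dfa_def)
next
  fix m assume "\<exists>Q' delta' q0' F'. dfa Alph Q' delta' q0' F' \<and> card Q' = m \<and>
                  dfa_lang Alph delta' q0' F' = dfa_lang Alph delta q0 F"
  then obtain Q' delta' q0' F' where "dfa Alph Q' delta' q0' F'" "card Q' = m"
      "dfa_lang Alph delta' q0' F' = dfa_lang Alph delta q0 F"
    by blast
  then have "card (quotients Alph (dfa_lang Alph delta q0 F)) \<le> m"
    by (metis card_quotients_le(2))
  then show "card Q \<le> m"
    using assms by (simp add: quotients_minimal_dfa card_image minimal_dfa_def)
qed

lemma syn_cong_minimal_dfa_iff:
  assumes "minimal_dfa Alph Q delta q0 F" and "x \<in> lists Alph" and "y \<in> lists Alph"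
  shows "syn_cong Alph (dfa_lang Alph delta q0 F) x y \<longleftrightarrow> word_map Q delta x = word_map Q delta y"
proof -
  have dfa: "dfa Alph Q delta q0 F" and inj: "inj_on (\<lambda>q. dfa_lang Alph delta q F) Q"
    using assms(1) unfolding minimal_dfa_def by simp_all
  have "syn_cong Alph (dfa_lang Alph delta q0 F) x y \<longleftrightarrow>
      (\<forall>q\<in>Q. lquot x (dfa_lang Alph delta q F) = lquot y (dfa_lang Alph delta q F))"
    unfolding syn_cong_iff_lquot[OF dfa_lang_subset_lists] quotients_minimal_dfa[OF assms(1)]
    by (simp add: Ball_image_comp)
  also have "\<dots> \<longleftrightarrow>
      (\<forall>q\<in>Q. dfa_lang Alph delta (foldl delta q x) F = dfa_lang Alph delta (foldl delta q y) F)"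
    by (simp only: lquot_dfa_lang assms(2,3))
  also have "\<dots> \<longleftrightarrow> (\<forall>q\<in>Q. foldl delta q x = foldl delta q y)"
  proof (rule ball_cong)
    fix q assume "q \<in> Q"
    then show "dfa_lang Alph delta (foldl delta q x) F = dfa_lang Alph delta (foldl delta q y) F
        \<longleftrightarrow> foldl delta q x = foldl delta q y"
      using inj_on_eq_iff[OF inj] foldl_dfa_in_states[OF dfa _ assms(2)]
        foldl_dfa_in_states[OF dfa _ assms(3)] by blast
  qed simp
  also have "\<dots> \<longleftrightarrow> word_map Q delta x = word_map Q delta y"
    by (simp add: word_map_eq_iff)
  finally show ?thesis .
qed

lemma syntactic_complexity_minimal_dfa:
  assumes "minimal_dfa Alph Q delta q0 F"
  shows "syntactic_complexity Alph (dfa_lang Alph delta q0 F)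
           = card (word_map Q delta ` nonempty_words Alph)"
  using syn_cong_minimal_dfa_iff[OF assms]
  by (intro syntactic_complexity_eq_card_image) (simp add: nonempty_words_def)

text \<open>The minimal DFA of L on the states {0..<K}, for a numbering \<phi> of its quotients.\<close>

definition quotient_delta :: "'a set \<Rightarrow> 'a list set \<Rightarrow> ('a list set \<Rightarrow> nat) \<Rightarrow> nat \<Rightarrow> 'a \<Rightarrow> nat" where
  "quotient_delta Alph L \<phi> i a = \<phi> (lquot [a] (inv_into (quotients Alph L) \<phi> i))"

definition quotient_final :: "'a set \<Rightarrow> 'a list set \<Rightarrow> ('a list set \<Rightarrow> nat) \<Rightarrow> nat \<Rightarrow> nat set" where
  "quotient_final Alph L \<phi> K = {i \<in> {0..<K}. [] \<in> inv_into (quotients Alph L) \<phi> i}"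

lemma foldl_quotient_delta:
  assumes \<phi>: "bij_betw \<phi> (quotients Alph L) {0..<K}" and "i < K" and "w \<in> lists Alph"
  shows "foldl (quotient_delta Alph L \<phi>) i w = \<phi> (lquot w (inv_into (quotients Alph L) \<phi> i))"
  using assms(2,3)
proof (induction w arbitrary: i)
  case Nil
  then show ?case by (simp add: bij_betw_inv_into_right[OF \<phi>])
next
  case (Cons a w)
  let ?X = "lquot [a] (inv_into (quotients Alph L) \<phi> i)"
  have "?X \<in> quotients Alph L"
    using Cons.prems bij_betw_apply[OF bij_betw_inv_into[OF \<phi>]] by (intro lquot_in_quotients) auto
  then have "quotient_delta Alph L \<phi> i a < K"
    and "inv_into (quotients Alph L) \<phi> (quotient_delta Alph L \<phi> i a) = ?X"
    using bij_betw_apply[OF \<phi>] bij_betw_inv_into_left[OF \<phi>] by (auto simp: quotient_delta_def)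
  with Cons show ?case by (simp add: lquot_append[of "[a]" w, simplified])
qed

lemma dfa_lang_quotient_delta:
  assumes L: "L \<subseteq> lists Alph" and \<phi>: "bij_betw \<phi> (quotients Alph L) {0..<K}" and "i < K"
  shows "dfa_lang Alph (quotient_delta Alph L \<phi>) i (quotient_final Alph L \<phi> K)
           = inv_into (quotients Alph L) \<phi> i"
proof -
  let ?X = "inv_into (quotients Alph L) \<phi> i"
  have X: "?X \<in> quotients Alph L"
    using \<open>i < K\<close> bij_betw_apply[OF bij_betw_inv_into[OF \<phi>]] by simp
  have "foldl (quotient_delta Alph L \<phi>) i w \<in> quotient_final Alph L \<phi> K \<longleftrightarrow> w \<in> ?X"
    if "w \<in> lists Alph" for w
    using foldl_quotient_delta[OF \<phi> \<open>i < K\<close> that] lquot_in_quotients[OF X that]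
      bij_betw_apply[OF \<phi>] bij_betw_inv_into_left[OF \<phi>]
    by (simp add: quotient_final_def lquot_def)
  then show ?thesis
    using quotients_subset_lists[OF L X] by (auto simp: dfa_lang_def)
qed

lemma minimal_quotient_dfa:
  assumes L: "L \<subseteq> lists Alph" and \<phi>: "bij_betw \<phi> (quotients Alph L) {0..<K}"
  defines "delta \<equiv> quotient_delta Alph L \<phi>" and "F \<equiv> quotient_final Alph L \<phi> K"
  shows "minimal_dfa Alph {0..<K} delta (\<phi> L) F" and "dfa_lang Alph delta (\<phi> L) F = L"
proof -
  let ?\<psi> = "inv_into (quotients Alph L) \<phi>"
  have \<psi>_in: "?\<psi> i \<in> quotients Alph L" if "i < K" for i
    using that bij_betw_apply[OF bij_betw_inv_into[OF \<phi>]] by simp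
  have "L \<in> quotients Alph L"
    unfolding quotients_def using lquot_Nil[of L] lists.Nil[of Alph] by (metis image_eqI)
  then have "\<phi> L < K" and \<psi>_\<phi>_L: "?\<psi> (\<phi> L) = L"
    using bij_betw_apply[OF \<phi>] bij_betw_inv_into_left[OF \<phi>] by auto
  have state_lang: "dfa_lang Alph delta i F = ?\<psi> i" if "i < K" for i
    unfolding delta_def F_def using L \<phi> that by (rule dfa_lang_quotient_delta)
  show "dfa_lang Alph delta (\<phi> L) F = L"
    using state_lang[OF \<open>\<phi> L < K\<close>] \<psi>_\<phi>_L by simp
  have "dfa Alph {0..<K} delta (\<phi> L) F"
    using \<open>\<phi> L < K\<close> bij_betw_apply[OF \<phi>] lquot_in_quotients[OF \<psi>_in]
    by (auto simp: dfa_def delta_def F_def quotient_delta_def quotient_final_def)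
  moreover have "i \<in> (\<lambda>u. foldl delta (\<phi> L) u) ` lists Alph" if i: "i < K" for i
  proof -
    obtain u where "u \<in> lists Alph" and "lquot u L = ?\<psi> i"
      using \<psi>_in[OF i] by (auto simp: quotients_def)
    then have "foldl delta (\<phi> L) u = i"
      using foldl_quotient_delta[OF \<phi> \<open>\<phi> L < K\<close>] \<psi>_\<phi>_L bij_betw_inv_into_right[OF \<phi>] i
      by (simp add: delta_def)
    with \<open>u \<in> lists Alph\<close> show ?thesis by blast
  qed
  moreover have "inj_on ?\<psi> {0..<K}"
    using bij_betw_inv_into[OF \<phi>] by (rule bij_betw_imp_inj_on)
  then have "inj_on (\<lambda>i. dfa_lang Alph delta i F) {0..<K}"
    using inj_on_cong[of "{0..<K}" "\<lambda>i. dfa_lang Alph delta i F" ?\<psi>] state_lang by simp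
  ultimately show "minimal_dfa Alph {0..<K} delta (\<phi> L) F"
    by (auto simp: minimal_dfa_def)
qed

lemma syntactic_complexity_complement:
  assumes "L \<subseteq> lists Alph"
  shows "syntactic_complexity Alph (lists Alph - L) = syntactic_complexity Alph L"
proof -
  have "syn_cong Alph (lists Alph - L) x y \<longleftrightarrow> syn_cong Alph L x y"
    if "x \<in> nonempty_words Alph" "y \<in> nonempty_words Alph" for x y
    using that by (auto simp: syn_cong_def nonempty_words_def)
  then have "{(x, y). x \<in> nonempty_words Alph \<and> y \<in> nonempty_words Alph \<and> syn_cong Alph (lists Alph - L) x y}
      = {(x, y). x \<in> nonempty_words Alph \<and> y \<in> nonempty_words Alph \<and> syn_cong Alph L x y}"
    by blast
  then show ?thesis by (simp add: syntactic_complexity_def)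
qed

lemma dfa_complement:
  assumes "dfa Alph Q delta q0 F"
  shows "dfa Alph Q delta q0 (Q - F)"
    and "dfa_lang Alph delta q0 (Q - F) = lists Alph - dfa_lang Alph delta q0 F"
proof -
  show "dfa Alph Q delta q0 (Q - F)" using assms by (auto simp: dfa_def)
  have "q0 \<in> Q" using assms by (simp add: dfa_def)
  then show "dfa_lang Alph delta q0 (Q - F) = lists Alph - dfa_lang Alph delta q0 F"
    using foldl_dfa_in_states[OF assms] by (auto simp: dfa_lang_def)
qed

lemma regular_obtains_dfa_state_complexity:
  assumes "regular Alph L"
  obtains Q delta q0 F where "dfa Alph Q delta q0 F" and "card Q = state_complexity Alph L"
    and "dfa_lang Alph delta q0 F = L"
proof -
  let ?P = "\<lambda>m. \<exists>Q delta q0 F. dfa Alph Q delta q0 F \<and> card Q = m \<and> dfa_lang Alph delta q0 F = L"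
  from assms obtain Q delta q0 F where "dfa Alph Q delta q0 F" "dfa_lang Alph delta q0 F = L"
    by (auto simp: regular_def)
  then have "?P (card Q)" by blast
  then have "?P (LEAST m. ?P m)" by (rule LeastI)
  then show ?thesis using that by (auto simp: state_complexity_def)
qed

section \<open>Automata whose letters act by lowering maps\<close>

lemma word_map_in_lowering_maps:
  assumes dfa: "dfa Alph {0..<K} delta q0 F"
    and letters: "\<And>a. a \<in> Alph \<Longrightarrow> word_map {0..<K} delta [a] \<in> lowering_maps 1 K"
    and "w \<in> lists Alph"
  shows "word_map {0..<K} delta w \<in> lowering_maps (length w) K"
  using \<open>w \<in> lists Alph\<close>
proof (induction w)
  case Nil
  show ?case unfolding word_map_def by (rule restrict_in_lowering_maps) simp
next
  case (Cons a w)
  have "word_map {0..<K} delta (a # w) = compose {0..<K} (word_map {0..<K} delta w) (word_map {0..<K} delta [a])"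
    using word_map_append[OF dfa, of "[a]" w] Cons.hyps by simp
  also have "\<dots> \<in> lowering_maps (1 + length w) K"
    using Cons letters by (intro compose_lowering_maps) auto
  finally show ?case by simp
qed

lemma word_maps_subset_lowering_maps:
  assumes dfa: "dfa Alph {0..<K} delta q0 F"
    and letters: "\<And>a. a \<in> Alph \<Longrightarrow> word_map {0..<K} delta [a] \<in> lowering_maps 1 K"
  shows "word_map {0..<K} delta ` nonempty_words Alph \<subseteq> lowering_maps 1 K"
proof
  fix t assume "t \<in> word_map {0..<K} delta ` nonempty_words Alph"
  then obtain w where w: "w \<in> lists Alph" "w \<noteq> []" and t: "t = word_map {0..<K} delta w"
    by (auto simp: nonempty_words_def)
  have "word_map {0..<K} delta w \<in> lowering_maps (length w) K"
    using dfa letters w(1) by (rule word_map_in_lowering_maps)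
  moreover have "lowering_maps (length w) K \<subseteq> lowering_maps 1 K"
    using w(2) by (intro lowering_maps_antimono) (simp add: Suc_le_eq)
  ultimately show "t \<in> lowering_maps 1 K" using t by blast
qed

lemma word_maps_eq_lowering_maps:
  assumes n: "3 \<le> n" and dfa: "dfa Alph {0..<n} delta q0 F"
    and letters: "\<And>a. a \<in> Alph \<Longrightarrow> word_map {0..<n} delta [a] \<in> lowering_maps 1 n"
    and gens: "lowering_maps 1 n - lowering_maps 2 n \<subseteq> (\<lambda>a. word_map {0..<n} delta [a]) ` Alph"
  shows "word_map {0..<n} delta ` nonempty_words Alph = lowering_maps 1 n"
proof
  show "word_map {0..<n} delta ` nonempty_words Alph \<subseteq> lowering_maps 1 n"
    using dfa letters by (rule word_maps_subset_lowering_maps)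
  let ?W = "word_map {0..<n} delta ` nonempty_words Alph"
  show "lowering_maps 1 n \<subseteq> ?W"
  proof (rule lowering_maps_generated[OF n])
    show "lowering_maps 1 n - lowering_maps 2 n \<subseteq> ?W"
      using gens by (auto simp: nonempty_words_def)
    show "compose {0..<n} v u \<in> ?W" if "u \<in> ?W" and "v \<in> ?W" for u v
    proof -
      from \<open>u \<in> ?W\<close> \<open>v \<in> ?W\<close> obtain x y where "x \<in> nonempty_words Alph" "y \<in> nonempty_words Alph"
        and "u = word_map {0..<n} delta x" "v = word_map {0..<n} delta y"
        by auto
      moreover from this have "compose {0..<n} v u = word_map {0..<n} delta (x @ y)"
        by (simp add: word_map_append[OF dfa] nonempty_words_def)
      moreover have "x @ y \<in> nonempty_words Alph"
        using calculation by (simp add: nonempty_words_def)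
      ultimately show ?thesis by blast
    qed
  qed
qed

lemma finite_dfa_lang_lowering:
  assumes dfa: "dfa Alph {0..<K} delta q0 F"
    and letters: "\<And>a. a \<in> Alph \<Longrightarrow> word_map {0..<K} delta [a] \<in> lowering_maps 1 K"
    and "finite Alph" and "0 \<notin> F"
  shows "finite (dfa_lang Alph delta q0 F)"
proof -
  have "length w < K" if "w \<in> dfa_lang Alph delta q0 F" for w
  proof (rule ccontr)
    assume "\<not> length w < K"
    have w: "w \<in> lists Alph" and "foldl delta q0 w \<in> F"
      using that by (auto simp: dfa_lang_def)
    have "q0 < K" using dfa by (simp add: dfa_def)
    have "word_map {0..<K} delta w \<in> lowering_maps K K"
      using word_map_in_lowering_maps[OF dfa letters w] lowering_maps_antimono \<open>\<not> length w < K\<close>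
      by (meson not_less subsetD)
    from lowering_maps_le[OF this \<open>q0 < K\<close>] have "foldl delta q0 w = 0"
      using \<open>q0 < K\<close> by (simp add: word_map_def)
    with \<open>foldl delta q0 w \<in> F\<close> \<open>0 \<notin> F\<close> show False by simp
  qed
  then have "dfa_lang Alph delta q0 F \<subseteq> {w. set w \<subseteq> Alph \<and> length w \<le> K}"
    by (fastforce simp: dfa_lang_def)
  moreover have "finite {w. set w \<subseteq> Alph \<and> length w \<le> K}"
    using \<open>finite Alph\<close> by (rule finite_lists_length_le)
  ultimately show ?thesis by (rule finite_subset)
qed

lemma minimal_dfa_if_lowering_maps_realized:
  assumes dfa: "dfa Alph {0..<n} delta (n - 1) {1}"
    and realized: "lowering_maps 1 n \<subseteq> word_map {0..<n} delta ` lists Alph"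
  shows "minimal_dfa Alph {0..<n} delta (n - 1) {1}"
proof -
  have realize: "\<exists>w\<in>lists Alph. \<forall>q\<in>{0..<n}. foldl delta q w = t q"
    if "\<And>i. i < n \<Longrightarrow> t i \<le> i - 1" for t
  proof -
    have "restrict t {0..<n} \<in> lowering_maps 1 n" using that by (rule restrict_in_lowering_maps)
    with realized have "restrict t {0..<n} \<in> word_map {0..<n} delta ` lists Alph" by blast
    then show ?thesis by (simp only: restrict_in_word_maps_iff)
  qed
  have "q \<in> (\<lambda>u. foldl delta (n - 1) u) ` lists Alph" if "q < n" for q
  proof (cases "q = n - 1")
    case True
    then show ?thesis by (auto intro: image_eqI[of _ _ "[]"])
  next
    case False
    have "\<exists>w\<in>lists Alph. \<forall>p\<in>{0..<n}. foldl delta p w = (if p = n - 1 then q else 0)"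
      by (rule realize) (use False \<open>q < n\<close> in auto)
    then obtain w where "w \<in> lists Alph" "\<forall>p\<in>{0..<n}. foldl delta p w = (if p = n - 1 then q else 0)"
      by blast
    moreover from this(2) have "foldl delta (n - 1) w = q" using \<open>q < n\<close> by simp
    ultimately show ?thesis by blast
  qed
  moreover have "dfa_lang Alph delta p {1} \<noteq> dfa_lang Alph delta q {1}"
    if "q < p" "p < n" for p q
  proof (cases "p = 1")
    case True
    then show ?thesis using that by (auto simp: dfa_lang_def set_eq_iff intro!: exI[of _ "[]"])
  next
    case False
    have "\<exists>w\<in>lists Alph. \<forall>r\<in>{0..<n}. foldl delta r w = (if r = p then 1 else 0)"
      by (rule realize) (use False that in auto)
    then obtain w where "w \<in> lists Alph" "\<forall>r\<in>{0..<n}. foldl delta r w = (if r = p then 1 else 0)"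
      by blast
    then have "w \<in> dfa_lang Alph delta p {1}" "w \<notin> dfa_lang Alph delta q {1}"
      using that by (auto simp: dfa_lang_def)
    then show ?thesis by blast
  qed
  then have "inj_on (\<lambda>q. dfa_lang Alph delta q {1}) {0..<n}"
    by (intro inj_onI) (metis atLeastLessThan_iff linorder_neqE_nat)
  ultimately show ?thesis using dfa by (auto simp: minimal_dfa_def)
qed

section \<open>The lower bound on the alphabet\<close>

lemma ex_bij_betw_monotone_numbering:
  fixes h :: "'b \<Rightarrow> 'c::linorder"
  assumes "finite A"
  shows "\<exists>\<phi>. bij_betw \<phi> A {0..<card A} \<and> (\<forall>x\<in>A. \<forall>y\<in>A. h x < h y \<longrightarrow> \<phi> x < \<phi> y)"
  using assms
proof (induction A rule: finite_ranking_induct[where f = h])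
  case empty
  show ?case by (simp add: bij_betw_def)
next
  case (insert x A)
  then obtain \<phi> where \<phi>: "bij_betw \<phi> A {0..<card A}"
    and mono: "\<forall>y\<in>A. \<forall>z\<in>A. h y < h z \<longrightarrow> \<phi> y < \<phi> z"
    by blast
  show ?case
  proof (cases "x \<in> A")
    case True
    then show ?thesis using \<phi> mono by (intro exI[of _ \<phi>]) (simp add: insert_absorb)
  next
    case False
    define \<phi>' where "\<phi>' = \<phi>(x := card A)"
    have "bij_betw \<phi>' A {0..<card A}"
      by (rule bij_betw_cong[THEN iffD1, OF _ \<phi>]) (use False in \<open>auto simp: \<phi>'_def\<close>)
    then have "bij_betw \<phi>' (A \<union> {x}) ({0..<card A} \<union> {\<phi>' x})"
      using False by (intro notIn_Un_bij_betw) (simp_all add: \<phi>'_def)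
    then have "bij_betw \<phi>' (insert x A) {0..<card (insert x A)}"
      using False insert.hyps(1) by (simp add: \<phi>'_def atLeast0_lessThan_Suc)
    moreover have "\<phi>' y < \<phi>' z" if "y \<in> insert x A" "z \<in> insert x A" "h y < h z" for y z
    proof -
      \<comment> \<open>x has maximal h-value and receives the largest number\<close>
      have "y \<noteq> x" using that insert.hyps(2) by (auto simp: not_le[symmetric])
      then have "y \<in> A" using that(1) by simp
      show ?thesis
      proof (cases "z = x")
        case True
        then show ?thesis using \<open>y \<in> A\<close> \<open>y \<noteq> x\<close> \<phi> by (auto simp: \<phi>'_def bij_betw_def)
      next
        case False
        then show ?thesis using that \<open>y \<in> A\<close> \<open>y \<noteq> x\<close> mono by (simp add: \<phi>'_def)
      qed
    qed
    ultimately show ?thesis by blast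
  qed
qed

definition height :: "'a list set \<Rightarrow> nat" where
  "height X = (if X = {} then 0 else Suc (Max (length ` X)))"

lemma height_lquot_less:
  assumes "finite X" "X \<noteq> {}" "w \<noteq> []"
  shows "height (lquot w X) < height X"
proof (cases "lquot w X = {}")
  case True
  then show ?thesis using assms(2) by (simp add: height_def)
next
  case False
  have "Max (length ` lquot w X) \<in> length ` lquot w X"
    using False finite_lquot[OF assms(1)] by (intro Max_in) auto
  then obtain v where "v \<in> lquot w X" and v: "length v = Max (length ` lquot w X)"
    by auto
  from \<open>v \<in> lquot w X\<close> have "w @ v \<in> X"
    by (simp add: lquot_def)
  then have "length (w @ v) \<in> length ` X" by (rule imageI)
  then have "length (w @ v) \<le> Max (length ` X)"
    using assms(1) by (intro Max_ge) simp_all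
  with assms(3) have "length v < Max (length ` X)" by (cases w) auto
  then show ?thesis using False assms(2) v by (simp add: height_def)
qed

lemma empty_in_quotients:
  assumes "finite L" and "Alph \<noteq> {}"
  shows "{} \<in> quotients Alph L"
proof -
  obtain a where "a \<in> Alph" using assms(2) by blast
  have "finite (length ` L)" using assms(1) by (rule finite_imageI)
  then obtain m where m: "\<And>w. w \<in> L \<Longrightarrow> length w < m"
    unfolding finite_nat_set_iff_bounded by blast
  have "lquot (replicate m a) L = {}"
  proof (rule ccontr)
    assume "lquot (replicate m a) L \<noteq> {}"
    then obtain v where "replicate m a @ v \<in> L" by (auto simp: lquot_def)
    from m[OF this] show False by simp
  qed
  moreover have "replicate m a \<in> lists Alph" using \<open>a \<in> Alph\<close> by (induction m) simp_all
  ultimately show ?thesis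
    unfolding quotients_def by (metis image_eqI)
qed

lemma quotient_delta_lowering:
  assumes "finite L" and "Alph \<noteq> {}" and \<phi>: "bij_betw \<phi> (quotients Alph L) {0..<K}"
    and mono: "\<And>X Y. X \<in> quotients Alph L \<Longrightarrow> Y \<in> quotients Alph L \<Longrightarrow>
                 height X < height Y \<Longrightarrow> \<phi> X < \<phi> Y"
    and "a \<in> Alph"
  shows "word_map {0..<K} (quotient_delta Alph L \<phi>) [a] \<in> lowering_maps 1 K"
proof -
  let ?\<psi> = "inv_into (quotients Alph L) \<phi>"
  have \<psi>_in: "?\<psi> i \<in> quotients Alph L" and \<phi>_\<psi>: "\<phi> (?\<psi> i) = i" if "i < K" for i
    using that bij_betw_apply[OF bij_betw_inv_into[OF \<phi>]] bij_betw_inv_into_right[OF \<phi>] by auto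
  have "{} \<in> quotients Alph L" using \<open>finite L\<close> \<open>Alph \<noteq> {}\<close> by (rule empty_in_quotients)
  \<comment> \<open>the empty quotient has the least height, so it is the sink 0\<close>
  have \<psi>_0: "?\<psi> 0 = {}" if "0 < K"
  proof (rule ccontr)
    assume "?\<psi> 0 \<noteq> {}"
    then have "\<phi> {} < \<phi> (?\<psi> 0)"
      using mono \<open>{} \<in> quotients Alph L\<close> \<psi>_in[OF that] by (simp add: height_def)
    then show False using \<phi>_\<psi>[OF that] by simp
  qed
  then have "\<phi> {} = 0"
    using bij_betw_apply[OF \<phi> \<open>{} \<in> quotients Alph L\<close>] \<phi>_\<psi> by fastforce
  have "quotient_delta Alph L \<phi> i a \<le> i - 1" if "i < K" for i
  proof (cases "i = 0")
    case True
    then show ?thesis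
      using \<open>\<phi> {} = 0\<close> \<psi>_0 that by (simp add: quotient_delta_def lquot_def)
  next
    case False
    then have "?\<psi> i \<noteq> {}" using \<phi>_\<psi>[OF that] \<open>\<phi> {} = 0\<close> by auto
    moreover have "finite (?\<psi> i)"
      using \<psi>_in[OF that] \<open>finite L\<close> finite_lquot by (auto simp: quotients_def)
    ultimately have "height (lquot [a] (?\<psi> i)) < height (?\<psi> i)"
      by (intro height_lquot_less) simp_all
    moreover have "lquot [a] (?\<psi> i) \<in> quotients Alph L"
      using \<psi>_in[OF that] \<open>a \<in> Alph\<close> by (simp add: lquot_in_quotients)
    ultimately have "quotient_delta Alph L \<phi> i a < i"
      using mono \<psi>_in[OF that] \<phi>_\<psi>[OF that] by (fastforce simp: quotient_delta_def)
    then show ?thesis by simp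
  qed
  then show ?thesis unfolding word_map_def by (intro restrict_in_lowering_maps) simp
qed

lemma eq_if_fact_pred_le:
  assumes "K \<le> n" and "3 \<le> n" and "fact (n - 1) \<le> (fact (K - 1) :: nat)"
  shows "K = n"
proof (rule ccontr)
  assume "K \<noteq> n"
  have "fact (K - 1) < (fact (n - 1) :: nat)"
  proof (cases "K - 1 = 0")
    case True
    then show ?thesis using assms(2) fact_less_mono_nat[of 1 "n - 1"] by simp
  next
    case False
    then show ?thesis using assms(1) \<open>K \<noteq> n\<close> by (intro fact_less_mono_nat) auto
  qed
  with assms(3) show False by simp
qed

lemma card_alphabet_ge_if_lowering_letters:
  assumes "finite Alph" and n: "3 \<le> n" and "K \<le> n"
    and dfa: "dfa Alph {0..<K} delta q0 F"
    and letters: "\<And>a. a \<in> Alph \<Longrightarrow> word_map {0..<K} delta [a] \<in> lowering_maps 1 K"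
    and card_W: "card (word_map {0..<K} delta ` nonempty_words Alph) = fact (n - 1)"
  shows "fact (n - 1) - fact (n - 2) \<le> card Alph"
proof -
  define W where "W = word_map {0..<K} delta ` nonempty_words Alph"
  have "W \<subseteq> lowering_maps 1 K"
    unfolding W_def using dfa letters by (rule word_maps_subset_lowering_maps)
  then have "fact (n - 1) \<le> (fact (K - 1) :: nat)"
    using card_mono[OF finite_lowering_maps] card_W card_lowering_maps by (metis W_def)
  with \<open>K \<le> n\<close> n have "K = n" by (rule eq_if_fact_pred_le)
  with \<open>W \<subseteq> lowering_maps 1 K\<close> have W: "W = lowering_maps 1 n"
    using card_W card_lowering_maps[of 1 n]
    by (intro card_subset_eq finite_lowering_maps) (simp_all add: W_def)
  \<comment> \<open>words of length at least two act by maps lowering by 2, so the rest needs letters\<close>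
  have "lowering_maps 1 n - lowering_maps 2 n \<subseteq> (\<lambda>a. word_map {0..<K} delta [a]) ` Alph"
  proof
    fix t assume t: "t \<in> lowering_maps 1 n - lowering_maps 2 n"
    then obtain w where w: "w \<in> lists Alph" "w \<noteq> []" and t_eq: "t = word_map {0..<K} delta w"
      using W by (auto simp: W_def nonempty_words_def)
    have "\<not> 2 \<le> length w"
      using word_map_in_lowering_maps[OF dfa letters w(1)] lowering_maps_antimono[of 2 "length w" n]
        t t_eq \<open>K = n\<close> by blast
    with w obtain a where "w = [a]" "a \<in> Alph"
      by (cases w) (auto simp: Suc_le_eq)
    with t_eq show "t \<in> (\<lambda>a. word_map {0..<K} delta [a]) ` Alph" by blast
  qed
  then have "card (lowering_maps 1 n - lowering_maps 2 n) \<le> card Alph"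
    using \<open>finite Alph\<close> by (meson card_image_le card_mono finite_imageI order_trans)
  then show ?thesis unfolding card_lowering_maps_1_diff_2 .
qed

lemma card_alphabet_ge_finite_lang:
  assumes "finite Alph" and "Alph \<noteq> {}" and n: "3 \<le> n" and "finite L"
    and dfa: "dfa Alph Q delta q0 F" and L: "dfa_lang Alph delta q0 F = L" and "card Q = n"
    and sc: "syntactic_complexity Alph L = fact (n - 1)"
  shows "fact (n - 1) - fact (n - 2) \<le> card Alph"
proof -
  define K where "K = card (quotients Alph L)"
  have "finite (quotients Alph L)" and "K \<le> n"
    using card_quotients_le[OF dfa] L \<open>card Q = n\<close> by (simp_all add: K_def)
  then obtain \<phi> where \<phi>: "bij_betw \<phi> (quotients Alph L) {0..<K}"
    and mono: "\<forall>X\<in>quotients Alph L. \<forall>Y\<in>quotients Alph L. height X < height Y \<longrightarrow> \<phi> X < \<phi> Y"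
    unfolding K_def using ex_bij_betw_monotone_numbering by blast
  have "L \<subseteq> lists Alph" using L dfa_lang_subset_lists by blast
  note min = minimal_quotient_dfa[OF this \<phi>]
  have "card (word_map {0..<K} (quotient_delta Alph L \<phi>) ` nonempty_words Alph) = fact (n - 1)"
    using syntactic_complexity_minimal_dfa[OF min(1)] sc min(2) by simp
  moreover have "dfa Alph {0..<K} (quotient_delta Alph L \<phi>) (\<phi> L) (quotient_final Alph L \<phi> K)"
    using min(1) by (simp add: minimal_dfa_def)
  ultimately show ?thesis
    using quotient_delta_lowering[OF \<open>finite L\<close> \<open>Alph \<noteq> {}\<close> \<phi>] mono
    by (intro card_alphabet_ge_if_lowering_letters[OF \<open>finite Alph\<close> n \<open>K \<le> n\<close>]) auto
qed

lemma card_alphabet_ge_full_syntactic_complexity: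
  assumes "finite Alph" and "Alph \<noteq> {}" and L: "L \<subseteq> lists Alph" and n: "3 \<le> n"
    and "finite_or_cofinite Alph L" and "regular Alph L"
    and "state_complexity Alph L = n" and sc: "syntactic_complexity Alph L = fact (n - 1)"
  shows "fact (n - 1) - fact (n - 2) \<le> card Alph"
proof -
  obtain Q delta q0 F where dfa: "dfa Alph Q delta q0 F" and "card Q = n"
    and lang: "dfa_lang Alph delta q0 F = L"
    using regular_obtains_dfa_state_complexity[OF \<open>regular Alph L\<close>] \<open>state_complexity Alph L = n\<close>
    by metis
  show ?thesis
  proof (cases "finite L")
    case True
    then show ?thesis
      using card_alphabet_ge_finite_lang[OF \<open>finite Alph\<close> \<open>Alph \<noteq> {}\<close> n True dfa lang] \<open>card Q = n\<close> sc
      by simp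
  next
    case False
    \<comment> \<open>the complement is finite, has the same syntactic monoid and a DFA of the same size\<close>
    then have "finite (lists Alph - L)"
      using \<open>finite_or_cofinite Alph L\<close> by (simp add: finite_or_cofinite_def)
    moreover have "dfa_lang Alph delta q0 (Q - F) = lists Alph - L"
      using dfa_complement(2)[OF dfa] lang by simp
    moreover have "syntactic_complexity Alph (lists Alph - L) = fact (n - 1)"
      using syntactic_complexity_complement[OF L] sc by simp
    ultimately show ?thesis
      using card_alphabet_ge_finite_lang[OF \<open>finite Alph\<close> \<open>Alph \<noteq> {}\<close> n _ dfa_complement(1)[OF dfa]]
        \<open>card Q = n\<close> by simp
  qed
qed

section \<open>Tightness\<close>

lemma ex_finite_lang_full_syntactic_complexity:
  assumes n: "3 \<le> n"
  shows "\<exists>(Alph :: nat set) L. finite Alph \<and> card Alph = fact (n - 1) - fact (n - 2) \<and>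
           L \<subseteq> lists Alph \<and> finite_or_cofinite Alph L \<and>
           state_complexity Alph L = n \<and> syntactic_complexity Alph L = fact (n - 1)"
proof -
  define Gens where "Gens = lowering_maps 1 n - lowering_maps 2 n"
  define Alph where "Alph = {0..<card Gens}"
  have "finite Gens" by (simp add: Gens_def finite_lowering_maps)
  then obtain g where g: "bij_betw g Alph Gens"
    unfolding Alph_def by (rule ex_bij_betw_nat_finite[elim_format]) blast
  define delta where "delta q a = g a q" for q a
  have g_in: "g a \<in> lowering_maps 1 n" if "a \<in> Alph" for a
    using g that by (auto simp: bij_betw_def Gens_def)
  have letter: "word_map {0..<n} delta [a] = g a" if "a \<in> Alph" for a
    using g_in[OF that] by (auto simp: word_map_def delta_def lowering_maps_iff extensional_restrict)
  have "delta q a < n" if "q < n" "a \<in> Alph" for q a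
    using lowering_maps_le[OF g_in[OF that(2)] that(1)] that(1) by (simp add: delta_def)
  then have dfa: "dfa Alph {0..<n} delta (n - 1) {1}"
    using n by (auto simp: dfa_def)
  have letters: "word_map {0..<n} delta [a] \<in> lowering_maps 1 n" if "a \<in> Alph" for a
    using letter g_in that by simp
  have "lowering_maps 1 n - lowering_maps 2 n \<subseteq> (\<lambda>a. word_map {0..<n} delta [a]) ` Alph"
    using g letter by (auto simp: Gens_def bij_betw_def)
  then have W: "word_map {0..<n} delta ` nonempty_words Alph = lowering_maps 1 n"
    using n dfa letters by (intro word_maps_eq_lowering_maps) auto
  define L where "L = dfa_lang Alph delta (n - 1) {1}"
  have min: "minimal_dfa Alph {0..<n} delta (n - 1) {1}"
    using W by (intro minimal_dfa_if_lowering_maps_realized[OF dfa]) (auto simp: nonempty_words_def)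
  have "finite L"
    unfolding L_def using dfa letters by (rule finite_dfa_lang_lowering) (simp_all add: Alph_def)
  moreover have "card Alph = fact (n - 1) - fact (n - 2)"
    unfolding Alph_def Gens_def card_atLeastLessThan diff_zero by (rule card_lowering_maps_1_diff_2)
  moreover have "state_complexity Alph L = n"
    using state_complexity_minimal_dfa[OF min] by (simp add: L_def)
  moreover have "syntactic_complexity Alph L = fact (n - 1)"
    using syntactic_complexity_minimal_dfa[OF min] W by (simp add: L_def card_lowering_maps)
  ultimately show ?thesis
    by (intro exI[of _ Alph] exI[of _ L]) (auto simp: finite_or_cofinite_def L_def dfa_lang_def Alph_def)
qed

theorem theorem2:
  shows "(\<forall>(Alph :: 'a set) L n.
            finite Alph \<and> Alph \<noteq> {} \<and> L \<subseteq> lists Alph \<and> n \<ge> 3 \<and>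
            finite_or_cofinite Alph L \<and> regular Alph L \<and>
            state_complexity Alph L = n \<and> syntactic_complexity Alph L = fact (n - 1)
            \<longrightarrow> card Alph \<ge> fact (n - 1) - fact (n - 2))
       \<and> (\<forall>n::nat. n \<ge> 3 \<longrightarrow>
            (\<exists>(Alph :: nat set) L. finite Alph \<and> card Alph = fact (n - 1) - fact (n - 2) \<and>
               L \<subseteq> lists Alph \<and> finite_or_cofinite Alph L \<and>
               state_complexity Alph L = n \<and> syntactic_complexity Alph L = fact (n - 1)))"
  using card_alphabet_ge_full_syntactic_complexity ex_finite_lang_full_syntactic_complexity
  by blast

end
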